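(* Let $q$ be a prime number, let $l>2$ be an integer, and consider $m=q^l$ inputs each of size one with reducer capacity $q$. Then there is an A2A mapping schema for these inputs using at most $q\cdot(q(q+1))^{l-1}$ reducers and having communication cost at most $q^2\cdot(q(q+1))^{l-1}$.
   Context: An A2A mapping schema for inputs with sizes $w_1,\dots,w_m$ and reducer capacity $q$ is an assignment of the inputs to a collection of reducers (each input may go to several reducers) such that every reducer receives inputs of total size at most $q$ and every pair of distinct inputs is assigned together to at least one reducer. The communication cost is the sum over reducers of the total size of the inputs assigned to it. *)

theory Defs
  imports Main "HOL-Computational_Algebra.Primes"
begin

(* Inputs are indexed by {0..<m}; input i has size w i.
   A mapping schema is a list of reducers; each reducer is the set of inputs
   assigned to it (an input may be assigned to several reducers). *)

definition reducer_load :: "(nat \<Rightarrow> nat) \<Rightarrow> nat set \<Rightarrow> nat" where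
  "reducer_load w R = (\<Sum>i\<in>R. w i)"

definition a2a_schema :: "nat \<Rightarrow> (nat \<Rightarrow> nat) \<Rightarrow> nat \<Rightarrow> nat set list \<Rightarrow> bool" where
  "a2a_schema m w q rs \<longleftrightarrow>
     (\<forall>R\<in>set rs. R \<subseteq> {0..<m} \<and> reducer_load w R \<le> q) \<and>
     (\<forall>i<m. \<forall>j<m. i \<noteq> j \<longrightarrow> (\<exists>R\<in>set rs. i \<in> R \<and> j \<in> R))"

definition comm_cost :: "(nat \<Rightarrow> nat) \<Rightarrow> nat set list \<Rightarrow> nat" where
  "comm_cost w rs = (\<Sum>R\<leftarrow>rs. reducer_load w R)"

end

theory Submission
  imports Defs "HOL-Number_Theory.Cong"
begin

text \<open>The inputs are identified with the \<open>q\<^sup>l\<close> points of the affine space \<open>\<bbbF>\<^sub>q\<^sup>l\<close>.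
  Two distinct points lie on a common line, and a line has exactly \<open>q\<close> points, so taking
  one reducer per line gives an A2A schema of capacity \<open>q\<close>. Lines are enumerated as
  \<open>{x + t d | t \<in> \<bbbF>\<^sub>q}\<close> for every base point \<open>x\<close> and every direction \<open>d\<close> normalised to have
  first nonzero coordinate 1; there are \<open>q\<^sup>l\<close> base points and at most \<open>(q + 1)\<^sup>l\<^sup>-\<^sup>1\<close>
  such directions, each reducer costing at most \<open>q\<close>.\<close>

lemma a2a_schema_image_of_cover:
  assumes h: "bij_betw h P {0..<m}"
    and blocks: "\<And>B. B \<in> set Bs \<Longrightarrow> B \<subseteq> P \<and> card B \<le> c"
    and cover: "\<And>x y. x \<in> P \<Longrightarrow> y \<in> P \<Longrightarrow> x \<noteq> y \<Longrightarrow> \<exists>B\<in>set Bs. x \<in> B \<and> y \<in> B"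
  shows "a2a_schema m (\<lambda>_. 1) c (map ((`) h) Bs)"
  unfolding a2a_schema_def reducer_load_def
proof (intro conjI ballI allI impI)
  have "finite P" using h bij_betw_finite by blast
  fix R assume "R \<in> set (map ((`) h) Bs)"
  then obtain B where B: "B \<in> set Bs" and R: "R = h ` B" by auto
  show "R \<subseteq> {0..<m}" using R blocks[OF B] bij_betw_imp_surj_on[OF h] by blast
  have "card R \<le> card B" unfolding R using blocks[OF B] \<open>finite P\<close>
    by (intro card_image_le) (meson finite_subset)
  then show "(\<Sum>i\<in>R. 1) \<le> c" using blocks[OF B] by simp
next
  fix i j assume "i < m" "j < m" "i \<noteq> j"
  define x y where "x = inv_into P h i" and "y = inv_into P h j"
  have "x \<in> P" "y \<in> P" "h x = i" "h y = j"
    using h \<open>i < m\<close> \<open>j < m\<close> unfolding x_def y_def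
    by (auto simp: bij_betw_def f_inv_into_f inv_into_into)
  with cover[of x y] \<open>i \<noteq> j\<close> obtain B where "B \<in> set Bs" "x \<in> B" "y \<in> B" by blast
  then show "\<exists>R\<in>set (map ((`) h) Bs). i \<in> R \<and> j \<in> R"
    using \<open>h x = i\<close> \<open>h y = j\<close> by (intro bexI[of _ "h ` B"]) auto
qed

lemma comm_cost_unit_weights_le:
  assumes "a2a_schema m (\<lambda>_. 1) c rs"
  shows "comm_cost (\<lambda>_. 1) rs \<le> length rs * c"
proof -
  have "\<And>R. R \<in> set rs \<Longrightarrow> reducer_load (\<lambda>_. 1) R \<le> c"
    using assms unfolding a2a_schema_def by blast
  then show ?thesis unfolding comm_cost_def by (induction rs) (auto intro: add_mono)
qed

lemma sub_mod_eq_0_iff: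
  fixes a b q :: nat
  assumes "a < q" "b < q"
  shows "(b + q - a) mod q = 0 \<longleftrightarrow> a = b"
proof (cases "a \<le> b")
  case True
  have "(b + q - a) mod q = (b - a + q) mod q" using True by (simp add: add.commute)
  also have "\<dots> = b - a" using assms by simp
  finally show ?thesis using True by linarith
next
  case False
  then have "(b + q - a) mod q = b + q - a" using assms by simp
  with False assms show ?thesis by simp
qed

lemma add_sub_mod_cancel:
  fixes a b q :: nat
  assumes "a < q" "b < q"
  shows "(a + (b + q - a) mod q) mod q = b"
proof -
  have "(a + (b + q - a) mod q) mod q = (a + (b + q - a)) mod q" by (simp add: mod_add_right_eq)
  also have "a + (b + q - a) = b + q" using assms by simp
  finally show ?thesis using assms by simp
qed

lemma prime_scaling_surj_mod:
  fixes q a :: nat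
  assumes "prime q" "0 < a" "a < q"
  obtains a' where "\<And>b. b < q \<Longrightarrow> a * (b * a' mod q) mod q = b"
proof -
  have "\<not> q dvd a" using assms by (auto dest: dvd_imp_le)
  then have "coprime a q" using assms(1) prime_imp_coprime coprime_commute by blast
  moreover have "1 < q" using assms(1) prime_gt_1_nat by blast
  ultimately obtain a' where a': "[a * a' = 1] (mod q)" using cong_solve_coprime_nat by auto
  have "a * (b * a' mod q) mod q = b" if "b < q" for b
  proof -
    have "a * (b * a' mod q) mod q = b * (a * a') mod q"
      by (simp add: mod_mult_right_eq mult.left_commute)
    also have "\<dots> = b * (a * a' mod q) mod q" by (simp add: mod_mult_right_eq)
    also have "\<dots> = b * 1 mod q" using a' \<open>1 < q\<close> unfolding cong_def by simp
    finally show ?thesis using that by simp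
  qed
  then show thesis using that by blast
qed

definition grid :: "nat \<Rightarrow> nat \<Rightarrow> nat list set" where
  "grid q l = {xs. length xs = l \<and> set xs \<subseteq> {0..<q}}"

lemma set_n_lists_upt: "set (List.n_lists l [0..<q]) = grid q l"
  unfolding grid_def set_n_lists by auto

lemma card_grid: "card (grid q l) = q ^ l"
  using card_lists_length_eq[of "{0..<q}" l] unfolding grid_def by (simp add: conj_commute)

text \<open>One representative of each point of the projective space: the vectors whose first
  nonzero coordinate is 1.\<close>

fun directions :: "nat \<Rightarrow> nat \<Rightarrow> nat list list" where
  "directions q 0 = []"
| "directions q (Suc n) = map ((#) 1) (List.n_lists n [0..<q]) @ map ((#) 0) (directions q n)"

lemma length_directions_le: "length (directions q (Suc n)) \<le> (q + 1) ^ n"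
proof (induction n)
  case 0
  then show ?case by simp
next
  case (Suc n)
  have "length (directions q (Suc (Suc n))) = q ^ Suc n + length (directions q (Suc n))"
    by (simp add: length_n_lists del: List.n_lists.simps)
  also have "\<dots> \<le> q * (q + 1) ^ n + (q + 1) ^ n"
    using Suc.IH by (intro add_mono) (simp_all add: power_mono)
  finally show ?case by simp
qed

lemma directions_in_grid:
  assumes "1 < q"
  shows "d \<in> set (directions q n) \<Longrightarrow> d \<in> grid q n"
proof (induction n arbitrary: d)
  case 0
  then show ?case by simp
next
  case (Suc n)
  then consider ys where "ys \<in> grid q n" "d = 1 # ys" | ys where "ys \<in> grid q n" "d = 0 # ys"
    by (auto simp: set_n_lists_upt simp del: List.n_lists.simps)
  then show ?case using assms by cases (auto simp: grid_def)
qed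

lemma nonzero_is_multiple_of_direction:
  assumes "prime q"
  shows "v \<in> grid q n \<Longrightarrow> v \<noteq> replicate n 0 \<Longrightarrow>
    \<exists>d\<in>set (directions q n). \<exists>t<q. v = map (\<lambda>a. t * a mod q) d"
proof (induction n arbitrary: v)
  case 0
  then show ?case by (simp add: grid_def)
next
  case (Suc n)
  have "1 < q" using assms prime_gt_1_nat by blast
  from Suc.prems obtain a w where v: "v = a # w" and w: "w \<in> grid q n" and "a < q"
    by (auto simp: grid_def length_Suc_conv)
  show ?case
  proof (cases "a = 0")
    case True
    with Suc.prems v have "w \<noteq> replicate n 0" by auto
    with Suc.IH w obtain d t where "d \<in> set (directions q n)" "t < q" "w = map (\<lambda>a. t * a mod q) d"
      by blast
    with True v show ?thesis by (intro bexI[of _ "0 # d"] exI[of _ t]) auto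
  next
    case False
    then obtain a' where a': "\<And>b. b < q \<Longrightarrow> a * (b * a' mod q) mod q = b"
      using prime_scaling_surj_mod[OF assms] \<open>a < q\<close> by blast
    define w' where "w' = map (\<lambda>b. b * a' mod q) w"
    have "w' \<in> set (List.n_lists n [0..<q])"
      using w \<open>1 < q\<close> by (auto simp: set_n_lists_upt grid_def w'_def)
    moreover have "map (\<lambda>b. a * (b * a' mod q) mod q) w = w"
      using w a' by (intro map_idI) (auto simp: grid_def)
    then have "w = map (\<lambda>b. a * b mod q) w'" by (simp add: w'_def comp_def)
    ultimately show ?thesis using v \<open>a < q\<close>
      by (intro bexI[of _ "1 # w'"] exI[of _ a]) auto
  qed
qed

definition line :: "nat \<Rightarrow> nat list \<Rightarrow> nat list \<Rightarrow> nat list set" where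
  "line q x d = (\<lambda>t. map2 (\<lambda>a b. (a + t * b) mod q) x d) ` {0..<q}"

lemma card_line_le: "card (line q x d) \<le> q"
  unfolding line_def using card_image_le[of "{0..<q}"] by simp

lemma map2_mod_in_grid:
  fixes q :: nat
  assumes "0 < q" "length xs = l" "length ys = l"
  shows "map2 (\<lambda>a b. f a b mod q) xs ys \<in> grid q l"
  using assms unfolding grid_def by (auto split: prod.splits)

lemma line_subset_grid:
  assumes "0 < q" "x \<in> grid q l" "length d = l"
  shows "line q x d \<subseteq> grid q l"
  using assms map2_mod_in_grid[of q x l d] unfolding line_def grid_def by auto

lemma grid_pair_on_line:
  assumes "prime q" "x \<in> grid q l" "y \<in> grid q l" "x \<noteq> y"
  obtains d where "d \<in> set (directions q l)" "x \<in> line q x d" "y \<in> line q x d"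
proof -
  have "1 < q" using assms prime_gt_1_nat by blast
  have grid_nth: "z ! i < q" if "z \<in> grid q l" "i < l" for z i
  proof -
    have "z ! i \<in> set z" "set z \<subseteq> {0..<q}" using that by (simp_all add: grid_def)
    then show ?thesis by (meson atLeastLessThan_iff subsetD)
  qed
  have x: "length x = l" "\<And>i. i < l \<Longrightarrow> x ! i < q"
    and y: "length y = l" "\<And>i. i < l \<Longrightarrow> y ! i < q"
    using assms(2,3) grid_nth unfolding grid_def by auto
  define v where "v = map2 (\<lambda>a b. (b + q - a) mod q) x y"
  have v: "v ! i = (y ! i + q - x ! i) mod q" if "i < l" for i
    using that x y unfolding v_def by simp
  have "v \<in> grid q l" unfolding v_def using \<open>1 < q\<close> x(1) y(1) by (intro map2_mod_in_grid) auto
  moreover have "v \<noteq> replicate l 0"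
  proof
    assume "v = replicate l 0"
    then have "x ! i = y ! i" if "i < l" for i
      using v[OF that] sub_mod_eq_0_iff[OF x(2) y(2), OF that that] that by simp
    with x(1) y(1) \<open>x \<noteq> y\<close> show False by (metis nth_equalityI)
  qed
  ultimately obtain d t where d: "d \<in> set (directions q l)" and "t < q"
    and vd: "v = map (\<lambda>a. t * a mod q) d"
    using nonzero_is_multiple_of_direction[OF assms(1)] by blast
  have "length d = l" using directions_in_grid[OF \<open>1 < q\<close> d] by (simp add: grid_def)
  have "x = map2 (\<lambda>a b. (a + 0 * b) mod q) x d"
    using x \<open>length d = l\<close> by (intro nth_equalityI) auto
  then have "x \<in> line q x d" unfolding line_def by (rule image_eqI) (use \<open>1 < q\<close> in simp)
  moreover have "y = map2 (\<lambda>a b. (a + t * b) mod q) x d"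
  proof (rule nth_equalityI)
    show "length y = length (map2 (\<lambda>a b. (a + t * b) mod q) x d)"
      using x(1) y(1) \<open>length d = l\<close> by simp
    fix i assume "i < length y"
    then have "i < l" using y by simp
    have "(x ! i + t * d ! i) mod q = (x ! i + v ! i) mod q"
      using vd \<open>i < l\<close> \<open>length d = l\<close> by (simp add: mod_add_right_eq)
    also have "\<dots> = y ! i" using v x(2) y(2) \<open>i < l\<close> by (simp add: add_sub_mod_cancel)
    finally show "y ! i = map2 (\<lambda>a b. (a + t * b) mod q) x d ! i"
      using \<open>i < l\<close> x(1) \<open>length d = l\<close> by simp
  qed
  then have "y \<in> line q x d" unfolding line_def by (rule image_eqI) (use \<open>t < q\<close> in simp)
  ultimately show thesis using that d by blast
qed

definition affine_lines :: "nat \<Rightarrow> nat \<Rightarrow> nat list set list" where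
  "affine_lines q l = [line q x d. x \<leftarrow> List.n_lists l [0..<q], d \<leftarrow> directions q l]"

lemma set_affine_lines:
  "set (affine_lines q l) = {line q x d | x d. x \<in> grid q l \<and> d \<in> set (directions q l)}"
  unfolding affine_lines_def set_n_lists_upt[symmetric] by auto

lemma length_affine_lines_le: "length (affine_lines q (Suc n)) \<le> q ^ Suc n * (q + 1) ^ n"
proof -
  have "length (affine_lines q (Suc n)) = q ^ Suc n * length (directions q (Suc n))"
    unfolding affine_lines_def
    by (simp add: length_concat comp_def length_n_lists sum_list_triv del: directions.simps)
  then show ?thesis using length_directions_le[of q n] by simp
qed

lemma affine_line_in_grid:
  assumes "1 < q" "B \<in> set (affine_lines q l)"
  shows "B \<subseteq> grid q l \<and> card B \<le> q"
proof -
  from assms(2) obtain x d where B: "B = line q x d" and x: "x \<in> grid q l"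
    and d: "d \<in> set (directions q l)"
    unfolding set_affine_lines by blast
  have "length d = l" using directions_in_grid[OF assms(1) d] by (simp add: grid_def)
  then show ?thesis unfolding B using line_subset_grid[OF _ x] card_line_le assms(1) by simp
qed

lemma affine_lines_cover_pairs:
  assumes "prime q" "x \<in> grid q l" "y \<in> grid q l" "x \<noteq> y"
  shows "\<exists>B\<in>set (affine_lines q l). x \<in> B \<and> y \<in> B"
proof -
  obtain d where "d \<in> set (directions q l)" "x \<in> line q x d" "y \<in> line q x d"
    using grid_pair_on_line[OF assms] by blast
  then show ?thesis unfolding set_affine_lines using assms(2) by blast
qed

theorem theorem12:
  fixes q l :: nat
  assumes "prime q" and "l > 2"
  shows "\<exists>rs. a2a_schema (q ^ l) (\<lambda>_. 1) q rs
              \<and> length rs \<le> q * (q * (q + 1)) ^ (l - 1)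
              \<and> comm_cost (\<lambda>_. 1) rs \<le> q ^ 2 * (q * (q + 1)) ^ (l - 1)"
proof -
  have "1 < q" using assms(1) prime_gt_1_nat by blast
  have "finite (grid q l)" using finite_set[of "List.n_lists l [0..<q]"] by (simp add: set_n_lists_upt)
  then obtain h where h: "bij_betw h (grid q l) {0..<q ^ l}"
    using finite_same_card_bij[of "grid q l" "{0..<q ^ l}"] by (auto simp: card_grid)
  define rs where "rs = map ((`) h) (affine_lines q l)"
  have schema: "a2a_schema (q ^ l) (\<lambda>_. 1) q rs"
    unfolding rs_def using h affine_line_in_grid[OF \<open>1 < q\<close>] affine_lines_cover_pairs[OF assms(1)]
    by (rule a2a_schema_image_of_cover)
  obtain k where k: "l = Suc k" using assms(2) by (cases l) auto
  have "length rs \<le> q ^ l * (q + 1) ^ (l - 1)"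
    unfolding rs_def using length_affine_lines_le[of q k] k by simp
  also have "\<dots> = q * (q * (q + 1)) ^ (l - 1)"
    using k by (simp only: power_mult_distrib) simp
  finally have length: "length rs \<le> q * (q * (q + 1)) ^ (l - 1)" .
  have "comm_cost (\<lambda>_. 1) rs \<le> length rs * q" by (rule comm_cost_unit_weights_le[OF schema])
  also have "\<dots> \<le> q * (q * (q + 1)) ^ (l - 1) * q" using length by simp
  also have "\<dots> = q ^ 2 * (q * (q + 1)) ^ (l - 1)" by (simp add: power2_eq_square)
  finally show ?thesis using schema length by blast
qed

end
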